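(* Let $N\ge1$ and consider linear subsystems $\Sigma_1,\dots,\Sigma_N$ and their interconnection $\Sigma$ as described in the context, with safe sets $X_i$, input sets $U_i$, $X=\prod_i X_i$, $U=\prod_i U_i$. For each $i\in[1;N]$ let $\delta_i\ge 0$ and let $C_i^{\delta_i}:\mathbb{R}^{n_i}\rightrightarrows U_i+\delta_i\mathbb{B}$ be a $\delta_i$-relaxed safety controller for $\Sigma_i$ and the relaxed safe set $X_i+\delta_i\mathbb{B}$. Let $X^{\delta}=\prod_{i=1}^N(X_i+\delta_i\mathbb{B})$, $U^{\delta}=\prod_{i=1}^N(U_i+\delta_i\mathbb{B})$, and define $C^{\delta}:\mathbb{R}^n\rightrightarrows U^{\delta}$ by $C^\delta(x)=\emptyset$ for $x\in\mathbb{R}^n\setminus X^\delta$ and, for $x=[x_1;\dots;x_N]\in X^{\delta}$, $$C^{\delta}(x)=\{u=[u_1;\dots;u_N]\in U^{\delta}\mid u_i\in C_i^{\delta_i}(x_i)\ \text{for all } i\in[1;N]\}.$$ Then, with $\delta=\|[\delta_1;\dots;\delta_N]\|$ (infinity norm), $C^{\delta}$ is a $\delta$-relaxed safety controller for the interconnected system $\Sigma$, the relaxed safe set $X+\delta\mathbb{B}$ and the relaxed input set $U+\delta\mathbb{B}$.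
   Context: $\mathbb{B}$ denotes the closed unit ball w.r.t. the infinity norm in the Euclidean space of the appropriate dimension; $+$ between sets is the Minkowski sum, and $a+S=\{a\}+S$. Subsystem $\Sigma_i$ is linear: $x_i(t+1)=A_ix_i(t)+B_iu_i(t)+D_iz_i(t)+w_i(t)$ with $A_i\in\mathbb{R}^{n_i\times n_i}$, $B_i\in\mathbb{R}^{n_i\times m_i}$, $D_i\in\mathbb{R}^{n_i\times p_i}$, $w_i(t)\in W_i\subseteq\mathbb{R}^{n_i}$ (compact disturbance set), and internal input $z_i=[z_{i1};\dots;z_{i(i-1)};z_{i(i+1)};\dots;z_{iN}]\in\mathbb{R}^{p_i}$, $z_{ij}\in\mathbb{R}^{p_{ij}}$; its outputs are $h_{ij}(x_i)=H_{ij}x_i$ with matrices $H_{ij}\in\mathbb{R}^{p_{ji}\times n_i}$ for $j\ne i$. The interconnected system $\Sigma$ has state $x=[x_1;\dots;x_N]\in\mathbb{R}^n$, input $u=[u_1;\dots;u_N]\in\mathbb{R}^m$, disturbance $w\in W=\prod_i W_i$, and transition $f(x,u,w)=[A_1x_1+B_1u_1+D_1z_1+w_1;\dots;A_Nx_N+B_Nu_N+D_Nz_N+w_N]$ with $z_{ij}=H_{ji}x_j$. $X_i\subseteq\mathbb{R}^{n_i}$ and $U_i\subseteq\mathbb{R}^{m_i}$ are compact. For $i\ne j$ there are compact sets $Z_{ij}\subseteq\mathbb{R}^{p_{ij}}$ with $H_{ji}(X_j+\delta_j\mathbb{B})\subseteq Z_{ij}$, and $Z_i=\prod_{j\ne i}Z_{ij}$.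 A $\delta_i$-relaxed safety controller for $\Sigma_i$ and $X_i+\delta_i\mathbb{B}$ is a set-valued map $C_i:\mathbb{R}^{n_i}\rightrightarrows U_i+\delta_i\mathbb{B}$ with (1) $C_i(x_i)\subseteq U_i+\delta_i\mathbb{B}$ for all $x_i$; (2) $\mathrm{dom}(C_i)=\{x_i\mid C_i(x_i)\ne\emptyset\}\subseteq X_i+\delta_i\mathbb{B}$; (3) for all $x_i\in\mathrm{dom}(C_i)$ and $u_i\in C_i(x_i)$: $A_ix_i+B_iu_i+D_iZ_i+W_i\subseteq\mathrm{dom}(C_i)$. A $\delta$-relaxed safety controller for $\Sigma$, $X+\delta\mathbb{B}$ and $U+\delta\mathbb{B}$ is a set-valued map $C:\mathbb{R}^n\rightrightarrows U+\delta\mathbb{B}$ with (1) $C(x)\subseteq U+\delta\mathbb{B}$ for all $x$; (2) $\mathrm{dom}(C)\subseteq X+\delta\mathbb{B}$; (3) for all $x\in\mathrm{dom}(C)$, $u\in C(x)$, $w\in W$: $f(x,u,w)\in\mathrm{dom}(C)$. *)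

theory Defs
  imports "HOL-Analysis.Function_Topology" "Jordan_Normal_Form.Matrix"
begin

text \<open>Vectors of R^d are elements of carrier_vec d; matrices are Jordan_Normal_Form matrices.
  Subsystems are indexed by 0,...,N-1.\<close>

definition scaled_ball :: "nat \<Rightarrow> real \<Rightarrow> real vec set" where
  "scaled_ball d r = {b \<in> carrier_vec d. \<forall>k<d. \<bar>b $ k\<bar> \<le> r}"

definition inflate :: "nat \<Rightarrow> real vec set \<Rightarrow> real \<Rightarrow> real vec set" where
  "inflate d S r = {x + b | x b. x \<in> S \<and> b \<in> scaled_ball d r}"

text \<open>Compactness of a subset of R^d (via the canonical embedding into nat => real,
  which is a homeomorphism of R^d onto a closed subspace of the product space).\<close>
definition vec_to_fun :: "real vec \<Rightarrow> (nat \<Rightarrow> real)" where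
  "vec_to_fun v = (\<lambda>k. if k < dim_vec v then v $ k else 0)"

definition compact_in_R :: "nat \<Rightarrow> real vec set \<Rightarrow> bool" where
  "compact_in_R d S \<longleftrightarrow> S \<subseteq> carrier_vec d \<and> compact (vec_to_fun ` S)"

definition stack :: "real vec list \<Rightarrow> real vec" where
  "stack vs = foldr (\<lambda>v acc. v @\<^sub>v acc) vs (vec 0 (\<lambda>_. 0))"

definition block :: "(nat \<Rightarrow> nat) \<Rightarrow> nat \<Rightarrow> real vec \<Rightarrow> real vec" where
  "block d i x = vec (d i) (\<lambda>k. x $ (sum d {..<i} + k))"

definition stacked_prod :: "(nat \<Rightarrow> nat) \<Rightarrow> nat \<Rightarrow> (nat \<Rightarrow> real vec set) \<Rightarrow> real vec set" where
  "stacked_prod d N S = {x \<in> carrier_vec (sum d {..<N}). \<forall>i<N. block d i x \<in> S i}"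

definition others :: "nat \<Rightarrow> nat \<Rightarrow> nat list" where
  "others N i = filter (\<lambda>j. j \<noteq> i) [0..<N]"

definition Z_set :: "nat \<Rightarrow> (nat \<Rightarrow> nat \<Rightarrow> real vec set) \<Rightarrow> nat \<Rightarrow> real vec set" where
  "Z_set N Z i = {stack (map zz (others N i)) | zz. \<forall>j\<in>set (others N i). zz j \<in> Z i j}"

definition ctrl_dom :: "(real vec \<Rightarrow> real vec set) \<Rightarrow> real vec set" where
  "ctrl_dom C = {x. C x \<noteq> {}}"

definition sub_relaxed_safety_controller ::
  "nat \<Rightarrow> nat \<Rightarrow> real mat \<Rightarrow> real mat \<Rightarrow> real mat \<Rightarrow> real vec set \<Rightarrow> real vec set \<Rightarrow>
   real vec set \<Rightarrow> real vec set \<Rightarrow> real \<Rightarrow> (real vec \<Rightarrow> real vec set) \<Rightarrow> bool" where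
  "sub_relaxed_safety_controller nd md A B D Zi Wi Xi Ui \<delta> C \<longleftrightarrow>
     (\<forall>x. C x \<subseteq> inflate md Ui \<delta>) \<and>
     ctrl_dom C \<subseteq> inflate nd Xi \<delta> \<and>
     (\<forall>x\<in>ctrl_dom C. \<forall>u\<in>C x. \<forall>z\<in>Zi. \<forall>w\<in>Wi. A *\<^sub>v x + B *\<^sub>v u + D *\<^sub>v z + w \<in> ctrl_dom C)"

definition relaxed_safety_controller ::
  "nat \<Rightarrow> nat \<Rightarrow> (real vec \<Rightarrow> real vec \<Rightarrow> real vec \<Rightarrow> real vec) \<Rightarrow> real vec set \<Rightarrow>
   real vec set \<Rightarrow> real vec set \<Rightarrow> real \<Rightarrow> (real vec \<Rightarrow> real vec set) \<Rightarrow> bool" where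
  "relaxed_safety_controller nd md f W X U \<delta> C \<longleftrightarrow>
     (\<forall>x. C x \<subseteq> inflate md U \<delta>) \<and>
     ctrl_dom C \<subseteq> inflate nd X \<delta> \<and>
     (\<forall>x\<in>ctrl_dom C. \<forall>u\<in>C x. \<forall>w\<in>W. f x u w \<in> ctrl_dom C)"

definition internal_input ::
  "nat \<Rightarrow> (nat \<Rightarrow> nat) \<Rightarrow> (nat \<Rightarrow> nat \<Rightarrow> real mat) \<Rightarrow> nat \<Rightarrow> real vec \<Rightarrow> real vec" where
  "internal_input N n H i x = stack (map (\<lambda>j. H j i *\<^sub>v block n j x) (others N i))"

definition interconnection ::
  "nat \<Rightarrow> (nat \<Rightarrow> nat) \<Rightarrow> (nat \<Rightarrow> nat) \<Rightarrow> (nat \<Rightarrow> real mat) \<Rightarrow> (nat \<Rightarrow> real mat) \<Rightarrow>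
   (nat \<Rightarrow> real mat) \<Rightarrow> (nat \<Rightarrow> nat \<Rightarrow> real mat) \<Rightarrow> real vec \<Rightarrow> real vec \<Rightarrow> real vec \<Rightarrow> real vec" where
  "interconnection N n m A B D H x u w =
     stack (map (\<lambda>i. A i *\<^sub>v block n i x + B i *\<^sub>v block m i u
                     + D i *\<^sub>v internal_input N n H i x + block n i w) [0..<N])"

end

theory Submission
  imports Defs
begin

text \<open>Everything works blockwise. Since each \<open>C\<^sub>i(x\<^sub>i)\<close> lies in \<open>U\<^sub>i + \<delta>\<^sub>i\<bbbB>\<close> and each domain
  in \<open>X\<^sub>i + \<delta>\<^sub>i\<bbbB>\<close>, the domain of the product controller is exactly the product of the
  domains of the \<open>C\<^sub>i\<close>. The \<open>i\<close>-th block of a successor state is a successor of \<open>\<Sigma>\<^sub>i\<close> under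
  the internal input \<open>z\<^sub>i\<close>, which lies in \<open>Z\<^sub>i\<close> because every neighbour state \<open>x\<^sub>j\<close> lies in
  \<open>X\<^sub>j + \<delta>\<^sub>j\<bbbB>\<close>; so the product of the domains is invariant. Finally, a product of
  infinity-norm balls of radii \<open>\<delta>\<^sub>i\<close> is contained in the ball of radius \<open>max\<^sub>i \<delta>\<^sub>i\<close>, which
  turns the product of the relaxed sets into a relaxation of the product.\<close>

lemma stack_Cons: "stack (v # vs) = v @\<^sub>v stack vs"
  by (simp add: stack_def)

lemma dim_stack:
  "(\<And>j. j < length vs \<Longrightarrow> dim_vec (vs ! j) = d j) \<Longrightarrow> dim_vec (stack vs) = sum d {..<length vs}"
proof (induction vs arbitrary: d)
  case Nil
  then show ?case by (simp add: stack_def)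
next
  case (Cons v vs)
  have "dim_vec (stack vs) = sum (d \<circ> Suc) {..<length vs}"
    using Cons.prems by (intro Cons.IH) force
  moreover have "dim_vec v = d 0"
    using Cons.prems[of 0] by simp
  ultimately show ?case
    by (simp del: sum.lessThan_Suc add: stack_Cons sum.lessThan_Suc_shift)
qed

lemma block_index_bound:
  fixes d :: "nat \<Rightarrow> nat"
  assumes "i < N" and "k < d i"
  shows "sum d {..<i} + k < sum d {..<N}"
proof -
  have "sum d {..<i} + k < sum d {..<Suc i}"
    using assms(2) by simp
  also have "\<dots> \<le> sum d {..<N}"
    using assms(1) by (intro sum_mono2) auto
  finally show ?thesis .
qed

lemma block_index_decomp:
  fixes d :: "nat \<Rightarrow> nat"
  shows "k < sum d {..<N} \<Longrightarrow> \<exists>i<N. \<exists>k'<d i. k = sum d {..<i} + k'"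
proof (induction N)
  case 0
  then show ?case by simp
next
  case (Suc N)
  show ?case
  proof (cases "k < sum d {..<N}")
    case True
    then show ?thesis
      using Suc.IH less_Suc_eq by blast
  next
    case False
    then have "k - sum d {..<N} < d N" and "k = sum d {..<N} + (k - sum d {..<N})"
      using Suc.prems by simp_all
    then show ?thesis by blast
  qed
qed

lemma block_carrier: "block d i x \<in> carrier_vec (d i)"
  by (simp add: block_def)

lemma block_stack:
  assumes "\<And>j. j < length vs \<Longrightarrow> dim_vec (vs ! j) = d j" and "i < length vs"
  shows "block d i (stack vs) = vs ! i"
  using assms
proof (induction vs arbitrary: d i)
  case Nil
  then show ?case by simp
next
  case (Cons v vs)
  have dim_v: "dim_vec v = d 0"
    using Cons.prems(1)[of 0] by simp
  show ?case
  proof (cases i)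
    case 0
    then show ?thesis
      using dim_v by (auto simp: block_def stack_Cons)
  next
    case (Suc i')
    have IH: "block (d \<circ> Suc) i' (stack vs) = vs ! i'"
      using Cons.prems Suc by (intro Cons.IH) force+
    have dim_vs: "dim_vec (stack vs) = sum (d \<circ> Suc) {..<length vs}"
      using Cons.prems by (intro dim_stack) force
    show ?thesis
    proof (rule eq_vecI)
      show "dim_vec (block d i (stack (v # vs))) = dim_vec ((v # vs) ! i)"
        using Cons.prems(1)[of i] Cons.prems(2) by (simp add: block_def)
      fix k
      assume "k < dim_vec ((v # vs) ! i)"
      then have k: "k < d (Suc i')"
        using Cons.prems(1)[of i] Cons.prems(2) Suc by simp
      have "sum (d \<circ> Suc) {..<i'} + k < sum (d \<circ> Suc) {..<length vs}"
        using Cons.prems(2) Suc k by (intro block_index_bound) auto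
      then have "block d i (stack (v # vs)) $ k = block (d \<circ> Suc) i' (stack vs) $ k"
        using k dim_v dim_vs unfolding Suc
        by (simp del: sum.lessThan_Suc add: block_def stack_Cons sum.lessThan_Suc_shift add.assoc)
      then show "block d i (stack (v # vs)) $ k = (v # vs) ! i $ k"
        using IH Suc by simp
    qed
  qed
qed

lemma dim_map_upt_nth:
  fixes f :: "nat \<Rightarrow> real vec"
  assumes "\<And>i. i < N \<Longrightarrow> f i \<in> carrier_vec (d i)" and "j < length (map f [0..<N])"
  shows "dim_vec (map f [0..<N] ! j) = d j"
proof -
  from assms(2) have "j < N" by simp
  then show ?thesis using assms(1)[of j] by simp
qed

lemma carrier_stack_map_upt:
  fixes f :: "nat \<Rightarrow> real vec"
  assumes "\<And>i. i < N \<Longrightarrow> f i \<in> carrier_vec (d i)"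
  shows "stack (map f [0..<N]) \<in> carrier_vec (sum d {..<N})"
  using dim_stack[OF dim_map_upt_nth[OF assms]] by (intro carrier_vecI) simp

lemma block_stack_map_upt:
  fixes f :: "nat \<Rightarrow> real vec"
  assumes "\<And>i. i < N \<Longrightarrow> f i \<in> carrier_vec (d i)" and "i < N"
  shows "block d i (stack (map f [0..<N])) = f i"
  using block_stack[OF dim_map_upt_nth[OF assms(1)]] assms(2) by simp

lemma eq_vec_by_blocks:
  assumes "x \<in> carrier_vec (sum d {..<N})" and "y \<in> carrier_vec (sum d {..<N})"
    and "\<And>i. i < N \<Longrightarrow> block d i x = block d i y"
  shows "x = y"
proof (rule eq_vecI)
  show "dim_vec x = dim_vec y"
    using assms(1,2) by simp
  fix k
  assume "k < dim_vec y"
  then obtain i k' where "i < N" "k' < d i" and k: "k = sum d {..<i} + k'"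
    using assms(2) block_index_decomp by force
  then have "block d i x $ k' = block d i y $ k'"
    using assms(3) by simp
  then show "x $ k = y $ k"
    using \<open>k' < d i\<close> k by (simp add: block_def)
qed

lemma block_add:
  fixes x y :: "real vec"
  assumes "x \<in> carrier_vec (sum d {..<N})" and "y \<in> carrier_vec (sum d {..<N})" and "i < N"
  shows "block d i (x + y) = block d i x + block d i y"
  using assms block_index_bound[OF \<open>i < N\<close>] by (auto simp: block_def)

lemma stack_in_stacked_prod:
  assumes "\<And>i. i < N \<Longrightarrow> f i \<in> carrier_vec (d i)" and "\<And>i. i < N \<Longrightarrow> f i \<in> S i"
  shows "stack (map f [0..<N]) \<in> stacked_prod d N S"
  using assms carrier_stack_map_upt block_stack_map_upt by (simp add: stacked_prod_def)

lemma stacked_prod_mono: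
  "(\<And>i. i < N \<Longrightarrow> S i \<subseteq> T i) \<Longrightarrow> stacked_prod d N S \<subseteq> stacked_prod d N T"
  by (auto simp: stacked_prod_def)

lemma inflate_carrier: "S \<subseteq> carrier_vec d \<Longrightarrow> inflate d S r \<subseteq> carrier_vec d"
  by (auto simp: inflate_def scaled_ball_def)

lemma stacked_prod_scaled_ball_subset:
  assumes "\<And>i. i < N \<Longrightarrow> r i \<le> R"
  shows "stacked_prod d N (\<lambda>i. scaled_ball (d i) (r i)) \<subseteq> scaled_ball (sum d {..<N}) R"
proof
  fix b
  assume b: "b \<in> stacked_prod d N (\<lambda>i. scaled_ball (d i) (r i))"
  have "\<bar>b $ k\<bar> \<le> R" if "k < sum d {..<N}" for k
  proof -
    obtain i k' where i: "i < N" "k' < d i" and k: "k = sum d {..<i} + k'"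
      using block_index_decomp[OF \<open>k < sum d {..<N}\<close>] by blast
    have "\<bar>block d i b $ k'\<bar> \<le> r i"
      using b i by (simp add: stacked_prod_def scaled_ball_def)
    then show ?thesis
      using assms[OF i(1)] i(2) k by (simp add: block_def)
  qed
  then show "b \<in> scaled_ball (sum d {..<N}) R"
    using b by (simp add: stacked_prod_def scaled_ball_def)
qed

lemma stacked_prod_inflate_decomp:
  assumes x: "x \<in> stacked_prod d N (\<lambda>i. inflate (d i) (S i) (r i))"
    and S: "\<And>i. i < N \<Longrightarrow> S i \<subseteq> carrier_vec (d i)"
  obtains a b where "x = a + b" and "a \<in> stacked_prod d N S"
    and "b \<in> stacked_prod d N (\<lambda>i. scaled_ball (d i) (r i))"
proof -
  have "\<forall>i. \<exists>a b. i < N \<longrightarrow> block d i x = a + b \<and> a \<in> S i \<and> b \<in> scaled_ball (d i) (r i)"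
    using x by (auto simp: stacked_prod_def inflate_def)
  then obtain a b where ab: "\<And>i. i < N \<Longrightarrow>
      block d i x = a i + b i \<and> a i \<in> S i \<and> b i \<in> scaled_ball (d i) (r i)"
    by metis
  have a_carrier: "\<And>i. i < N \<Longrightarrow> a i \<in> carrier_vec (d i)"
    using ab S by blast
  have b_carrier: "\<And>i. i < N \<Longrightarrow> b i \<in> carrier_vec (d i)"
    using ab by (auto simp: scaled_ball_def)
  let ?a = "stack (map a [0..<N])" and ?b = "stack (map b [0..<N])"
  have a_stack: "?a \<in> carrier_vec (sum d {..<N})"
    and b_stack: "?b \<in> carrier_vec (sum d {..<N})"
    using a_carrier b_carrier by (blast intro: carrier_stack_map_upt)+
  have a_block: "block d i ?a = a i" and b_block: "block d i ?b = b i" if "i < N" for i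
    using a_carrier b_carrier that by (blast intro: block_stack_map_upt)+
  have "x = ?a + ?b"
  proof (rule eq_vec_by_blocks)
    show "x \<in> carrier_vec (sum d {..<N})"
      using x by (simp add: stacked_prod_def)
    show "?a + ?b \<in> carrier_vec (sum d {..<N})"
      using a_stack b_stack by (rule add_carrier_vec)
    show "block d i x = block d i (?a + ?b)" if "i < N" for i
      using ab[OF that] block_add[OF a_stack b_stack that] a_block[OF that] b_block[OF that]
      by simp
  qed
  moreover have "?a \<in> stacked_prod d N S" and "?b \<in> stacked_prod d N (\<lambda>i. scaled_ball (d i) (r i))"
    using ab by (auto intro: stack_in_stacked_prod a_carrier b_carrier)
  ultimately show ?thesis
    using that by blast
qed

lemma stacked_prod_inflate_subset:
  assumes "\<And>i. i < N \<Longrightarrow> S i \<subseteq> carrier_vec (d i)" and "\<And>i. i < N \<Longrightarrow> r i \<le> R"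
  shows "stacked_prod d N (\<lambda>i. inflate (d i) (S i) (r i))
           \<subseteq> inflate (sum d {..<N}) (stacked_prod d N S) R"
proof
  fix x
  assume "x \<in> stacked_prod d N (\<lambda>i. inflate (d i) (S i) (r i))"
  then obtain a b where "x = a + b" "a \<in> stacked_prod d N S"
    and "b \<in> stacked_prod d N (\<lambda>i. scaled_ball (d i) (r i))"
    using assms(1) by (rule stacked_prod_inflate_decomp)
  then show "x \<in> inflate (sum d {..<N}) (stacked_prod d N S) R"
    using stacked_prod_scaled_ball_subset[of N r R d, OF assms(2)] by (auto simp: inflate_def)
qed

definition product_controller ::
  "(nat \<Rightarrow> nat) \<Rightarrow> (nat \<Rightarrow> nat) \<Rightarrow> nat \<Rightarrow> (nat \<Rightarrow> real vec set) \<Rightarrow> (nat \<Rightarrow> real vec set) \<Rightarrow>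
   (nat \<Rightarrow> real vec \<Rightarrow> real vec set) \<Rightarrow> real vec \<Rightarrow> real vec set" where
  "product_controller n m N Xd Ud C x =
     (if x \<in> stacked_prod n N Xd
      then {u \<in> stacked_prod m N Ud. \<forall>i<N. block m i u \<in> C i (block n i x)}
      else {})"

lemma ctrl_dom_product_controller:
  assumes range: "\<And>i y. i < N \<Longrightarrow> C i y \<subseteq> Ud i"
    and Ud: "\<And>i. i < N \<Longrightarrow> Ud i \<subseteq> carrier_vec (m i)"
    and dom: "\<And>i. i < N \<Longrightarrow> ctrl_dom (C i) \<subseteq> Xd i"
  shows "ctrl_dom (product_controller n m N Xd Ud C) = stacked_prod n N (\<lambda>i. ctrl_dom (C i))"
proof
  show "ctrl_dom (product_controller n m N Xd Ud C) \<subseteq> stacked_prod n N (\<lambda>i. ctrl_dom (C i))"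
    by (fastforce simp: ctrl_dom_def product_controller_def stacked_prod_def split: if_splits)
next
  show "stacked_prod n N (\<lambda>i. ctrl_dom (C i)) \<subseteq> ctrl_dom (product_controller n m N Xd Ud C)"
  proof
    fix x
    assume x: "x \<in> stacked_prod n N (\<lambda>i. ctrl_dom (C i))"
    then have "\<forall>i. \<exists>v. i < N \<longrightarrow> v \<in> C i (block n i x)"
      by (auto simp: stacked_prod_def ctrl_dom_def)
    then obtain v where v: "\<And>i. i < N \<Longrightarrow> v i \<in> C i (block n i x)"
      by metis
    have v_carrier: "\<And>i. i < N \<Longrightarrow> v i \<in> carrier_vec (m i)"
      using v range Ud by blast
    have "x \<in> stacked_prod n N Xd"
      using x stacked_prod_mono[of N "\<lambda>i. ctrl_dom (C i)" Xd n] dom by blast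
    moreover have "stack (map v [0..<N]) \<in> stacked_prod m N Ud"
      using v v_carrier range by (blast intro: stack_in_stacked_prod)
    ultimately have "stack (map v [0..<N]) \<in> product_controller n m N Xd Ud C x"
      using v v_carrier by (simp add: product_controller_def block_stack_map_upt)
    then show "x \<in> ctrl_dom (product_controller n m N Xd Ud C)"
      by (auto simp: ctrl_dom_def)
  qed
qed

lemma internal_input_in_Z_set:
  assumes "\<And>j. j < N \<Longrightarrow> j \<noteq> i \<Longrightarrow> H j i *\<^sub>v block n j x \<in> Z i j"
  shows "internal_input N n H i x \<in> Z_set N Z i"
  using assms unfolding internal_input_def Z_set_def others_def by auto

text \<open>No dimension hypotheses are needed: the sum of two vectors takes its dimension from the
  right summand, here the disturbance block.\<close>
lemma
  shows carrier_interconnection: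
      "interconnection N n m A B D H x u w \<in> carrier_vec (sum n {..<N})"
    and block_interconnection: "i < N \<Longrightarrow> block n i (interconnection N n m A B D H x u w) =
      A i *\<^sub>v block n i x + B i *\<^sub>v block m i u + D i *\<^sub>v internal_input N n H i x + block n i w"
proof -
  let ?f = "\<lambda>i. A i *\<^sub>v block n i x + B i *\<^sub>v block m i u + D i *\<^sub>v internal_input N n H i x
                 + block n i w"
  have f_carrier: "\<And>i. i < N \<Longrightarrow> ?f i \<in> carrier_vec (n i)"
    using block_carrier[of n _ w] by (simp only: carrier_vec_def mem_Collect_eq index_add_vec(2))
  show "interconnection N n m A B D H x u w \<in> carrier_vec (sum n {..<N})"
    unfolding interconnection_def using f_carrier by (rule carrier_stack_map_upt)
  show "block n i (interconnection N n m A B D H x u w) = ?f i" if "i < N"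
    unfolding interconnection_def using f_carrier that by (rule block_stack_map_upt)
qed

lemma interconnection_preserves_product_of_domains:
  assumes Z_cover: "\<And>i j. i < N \<Longrightarrow> j < N \<Longrightarrow> i \<noteq> j \<Longrightarrow>
                    (\<lambda>v. H j i *\<^sub>v v) ` inflate (n j) (X j) (\<delta> j) \<subseteq> Z i j"
    and C: "\<And>i. i < N \<Longrightarrow> sub_relaxed_safety_controller (n i) (m i) (A i) (B i) (D i)
                              (Z_set N Z i) (W i) (X i) (U i) (\<delta> i) (C i)"
    and x: "x \<in> stacked_prod n N (\<lambda>i. ctrl_dom (C i))"
    and u: "\<And>i. i < N \<Longrightarrow> block m i u \<in> C i (block n i x)"
    and w: "w \<in> stacked_prod n N W"
  shows "interconnection N n m A B D H x u w \<in> stacked_prod n N (\<lambda>i. ctrl_dom (C i))"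
proof -
  have successor: "A i *\<^sub>v block n i x + B i *\<^sub>v block m i u + D i *\<^sub>v internal_input N n H i x
                     + block n i w \<in> ctrl_dom (C i)" if i: "i < N" for i
  proof -
    have "block n j x \<in> inflate (n j) (X j) (\<delta> j)" if "j < N" for j
      using x C[OF that] that by (auto simp: stacked_prod_def sub_relaxed_safety_controller_def)
    then have "internal_input N n H i x \<in> Z_set N Z i"
      using Z_cover[OF i] by (blast intro: internal_input_in_Z_set)
    moreover have "block n i x \<in> ctrl_dom (C i)" and "block n i w \<in> W i"
      using x w i by (simp_all add: stacked_prod_def)
    ultimately show ?thesis
      using C[OF i] u[OF i] unfolding sub_relaxed_safety_controller_def by blast
  qed
  show ?thesis
    using carrier_interconnection block_interconnection successor
    by (simp add: stacked_prod_def)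
qed

lemma relaxed_safety_controller_product_controller:
  assumes X_carrier: "\<And>i. i < N \<Longrightarrow> X i \<subseteq> carrier_vec (n i)"
    and U_carrier: "\<And>i. i < N \<Longrightarrow> U i \<subseteq> carrier_vec (m i)"
    and \<delta>_le: "\<And>i. i < N \<Longrightarrow> \<delta> i \<le> R"
    and Z_cover: "\<And>i j. i < N \<Longrightarrow> j < N \<Longrightarrow> i \<noteq> j \<Longrightarrow>
                    (\<lambda>v. H j i *\<^sub>v v) ` inflate (n j) (X j) (\<delta> j) \<subseteq> Z i j"
    and C: "\<And>i. i < N \<Longrightarrow> sub_relaxed_safety_controller (n i) (m i) (A i) (B i) (D i)
                              (Z_set N Z i) (W i) (X i) (U i) (\<delta> i) (C i)"
  shows "relaxed_safety_controller (\<Sum>i<N. n i) (\<Sum>i<N. m i) (interconnection N n m A B D H)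
           (stacked_prod n N W) (stacked_prod n N X) (stacked_prod m N U) R
           (product_controller n m N (\<lambda>i. inflate (n i) (X i) (\<delta> i))
              (\<lambda>i. inflate (m i) (U i) (\<delta> i)) C)"
    (is "relaxed_safety_controller _ _ _ _ _ _ _ ?C")
proof -
  let ?Xd = "\<lambda>i. inflate (n i) (X i) (\<delta> i)" and ?Ud = "\<lambda>i. inflate (m i) (U i) (\<delta> i)"
  have range: "\<And>i y. i < N \<Longrightarrow> C i y \<subseteq> ?Ud i"
    and dom: "\<And>i. i < N \<Longrightarrow> ctrl_dom (C i) \<subseteq> ?Xd i"
    using C by (simp_all add: sub_relaxed_safety_controller_def)
  have dom_C: "ctrl_dom ?C = stacked_prod n N (\<lambda>i. ctrl_dom (C i))"
    using range inflate_carrier[OF U_carrier] dom by (rule ctrl_dom_product_controller)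
  show ?thesis
    unfolding relaxed_safety_controller_def
  proof (intro conjI allI ballI)
    show "?C x \<subseteq> inflate (\<Sum>i<N. m i) (stacked_prod m N U) R" for x
      using stacked_prod_inflate_subset[of N U m \<delta>, OF U_carrier \<delta>_le]
      by (auto simp: product_controller_def)
    show "ctrl_dom ?C \<subseteq> inflate (\<Sum>i<N. n i) (stacked_prod n N X) R"
      using stacked_prod_mono[of N "\<lambda>i. ctrl_dom (C i)" ?Xd n, OF dom]
        stacked_prod_inflate_subset[of N X n \<delta>, OF X_carrier \<delta>_le]
      unfolding dom_C by blast
    fix x u w
    assume "x \<in> ctrl_dom ?C" and "u \<in> ?C x" and "w \<in> stacked_prod n N W"
    then show "interconnection N n m A B D H x u w \<in> ctrl_dom ?C"
      unfolding dom_C using Z_cover C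
      by (intro interconnection_preserves_product_of_domains[where X = X and U = U and Z = Z])
        (auto simp: product_controller_def split: if_splits)
  qed
qed

theorem theorem3:
  fixes N :: nat
    and n m :: "nat \<Rightarrow> nat"
    and pp :: "nat \<Rightarrow> nat \<Rightarrow> nat"
    and A B D :: "nat \<Rightarrow> real mat"
    and H :: "nat \<Rightarrow> nat \<Rightarrow> real mat"
    and X U W :: "nat \<Rightarrow> real vec set"
    and Z :: "nat \<Rightarrow> nat \<Rightarrow> real vec set"
    and \<delta> :: "nat \<Rightarrow> real"
    and Csub :: "nat \<Rightarrow> real vec \<Rightarrow> real vec set"
  assumes N: "N \<ge> 1"
    and A_dim: "\<And>i. i < N \<Longrightarrow> A i \<in> carrier_mat (n i) (n i)"
    and B_dim: "\<And>i. i < N \<Longrightarrow> B i \<in> carrier_mat (n i) (m i)"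
    and D_dim: "\<And>i. i < N \<Longrightarrow> D i \<in> carrier_mat (n i) (\<Sum>j\<leftarrow>others N i. pp i j)"
    and H_dim: "\<And>i j. i < N \<Longrightarrow> j < N \<Longrightarrow> i \<noteq> j \<Longrightarrow> H i j \<in> carrier_mat (pp j i) (n i)"
    and X_cpt: "\<And>i. i < N \<Longrightarrow> compact_in_R (n i) (X i)"
    and U_cpt: "\<And>i. i < N \<Longrightarrow> compact_in_R (m i) (U i)"
    and W_cpt: "\<And>i. i < N \<Longrightarrow> compact_in_R (n i) (W i)"
    and Z_cpt: "\<And>i j. i < N \<Longrightarrow> j < N \<Longrightarrow> i \<noteq> j \<Longrightarrow> compact_in_R (pp i j) (Z i j)"
    and Z_cover: "\<And>i j. i < N \<Longrightarrow> j < N \<Longrightarrow> i \<noteq> j \<Longrightarrow>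
                    (\<lambda>v. H j i *\<^sub>v v) ` inflate (n j) (X j) (\<delta> j) \<subseteq> Z i j"
    and \<delta>_nonneg: "\<And>i. i < N \<Longrightarrow> \<delta> i \<ge> 0"
    and Csub: "\<And>i. i < N \<Longrightarrow>
                 sub_relaxed_safety_controller (n i) (m i) (A i) (B i) (D i) (Z_set N Z i) (W i)
                   (X i) (U i) (\<delta> i) (Csub i)"
  shows "relaxed_safety_controller (\<Sum>i<N. n i) (\<Sum>i<N. m i)
           (interconnection N n m A B D H) (stacked_prod n N W)
           (stacked_prod n N X) (stacked_prod m N U)
           (Max ((\<lambda>i. \<bar>\<delta> i\<bar>) ` {..<N}))
           (\<lambda>x. if x \<in> stacked_prod n N (\<lambda>i. inflate (n i) (X i) (\<delta> i))
                then {u \<in> stacked_prod m N (\<lambda>i. inflate (m i) (U i) (\<delta> i)).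
                        \<forall>i<N. block m i u \<in> Csub i (block n i x)}
                else {})"
proof -
  have "relaxed_safety_controller (\<Sum>i<N. n i) (\<Sum>i<N. m i) (interconnection N n m A B D H)
          (stacked_prod n N W) (stacked_prod n N X) (stacked_prod m N U)
          (Max ((\<lambda>i. \<bar>\<delta> i\<bar>) ` {..<N}))
          (product_controller n m N (\<lambda>i. inflate (n i) (X i) (\<delta> i))
             (\<lambda>i. inflate (m i) (U i) (\<delta> i)) Csub)"
  proof (rule relaxed_safety_controller_product_controller[OF _ _ _ Z_cover Csub])
    show "X i \<subseteq> carrier_vec (n i)" and "U i \<subseteq> carrier_vec (m i)" if "i < N" for i
      using X_cpt[OF that] U_cpt[OF that] by (simp_all add: compact_in_R_def)
    show "\<delta> i \<le> Max ((\<lambda>i. \<bar>\<delta> i\<bar>) ` {..<N})" if "i < N" for i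
      using that by (intro order.trans[OF abs_ge_self Max_ge]) auto
  qed
  then show ?thesis
    by (simp only: product_controller_def[abs_def])
qed

end
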